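(* Consider the following block-Markov scheme over $k$ blocks of length $N$. Setting: $q_{Z|XY}$ is a channel with inputs $X,Y\in\{0,1\}$ and finite output alphabet $\mathcal Z$; $U,V,X$ are independent binary random variables with distributions $q_U,q_V,q_X$, $Y=\max(U,V)$, $Z$ is the output of $q_{Z|XY}$ on $(X,Y)$, giving a joint distribution $q_{UVXYZ}$, and $q_{U^{1:N}V^{1:N}X^{1:N}Y^{1:N}Z^{1:N}}=\prod_{i=1}^Nq_{UVXYZ}$. Fix $\xi>0$, $\delta_{\mathcal A}(N)=\log(11)\sqrt{\tfrac2N(3+\log N)}$, $\epsilon_1=2(\delta_{\mathcal A}(N)+\xi)$, $r_X=N(H(X|UZ)-\epsilon_1/2)$, $r_U=N(H(U|Z)-\epsilon_1/2)$, $r_V=N(H(V|UZX)-\epsilon_1/2)$. Hash functions $G_X,G_U,G_V$ from $\{0,1\}^N$ to $\{0,1\}^{r_X},\{0,1\}^{r_U},\{0,1\}^{r_V}$ are chosen independently and uniformly at random from two-universal families. Encoders $e^X_N,e^U_N,e^V_N$ map $N(H(X)+\epsilon_1/2)$, $N(H(U)+\epsilon_1/2)$, $N(H(V)+\epsilon_1/2)$ bits, respectively, into $\{0,1\}^N$, and when fed with uniformly distributed inputs their outputs have distributions within variational distance $\delta(N)$ of $q_{X^{1:N}},q_{U^{1:N}},q_{V^{1:N}}$, respectively. Block 1: $\widetilde X_1^{1:N}=e^X_N(E_1)$, $\widetilde U_1^{1:N}=e^U_N(D_1)$, $\widetilde V_1^{1:N}=e^V_N(F_1)$ with $E_1,D_1,F_1$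 uniform inputs. Block $i\in\llbracket2,k\rrbracket$: $\widetilde E_i=G_X(\widetilde X_{i-1}^{1:N})$, $\widetilde D_i=G_U(\widetilde U_{i-1}^{1:N})$, $\widetilde F_i=G_V(\widetilde V_{i-1}^{1:N})$, and $\widetilde X_i^{1:N}=e^X_N(\widetilde E_i\|E_i)$, $\widetilde U_i^{1:N}=e^U_N(\widetilde D_i\|D_i)$, $\widetilde V_i^{1:N}=e^V_N(\widetilde F_i\|F_i)$, where $\|$ is concatenation and $E_i,D_i,F_i$ are uniform bit strings of lengths $N(I(X;UZ)+\epsilon_1)$, $N(I(U;Z)+\epsilon_1)$, $N(I(V;UZX)+\epsilon_1)$. In each block $\widetilde Y_i^{1:N}=\max(\widetilde U_i^{1:N},\widetilde V_i^{1:N})$ componentwise, and $\widetilde Z_i^{1:N}$ is the output of the memoryless channel $q_{Z|XY}$ on $(\widetilde X_i^{1:N},\widetilde Y_i^{1:N})$. All fresh randomness $(E_i,D_i,F_i)_i$, the channel noise in different blocks and the hash choice are mutually independent, and $\widetilde p$ denotes distributions induced by this scheme (including the random choice of hash functions). Let $\delta^{(0)}(N)=2/N+\sqrt7\cdot2^{-N\xi/2}$. Then for every block $i\in\llbracket1,k\rrbracket$, $$\mathbb V\big(\widetilde p_{U_i^{1:N}V_i^{1:N}X_i^{1:N}Y_i^{1:N}Z_i^{1:N}},\,q_{U^{1:N}V^{1:N}X^{1:N}Y^{1:N}Z^{1:N}}\big)\le\delta_i(N),$$ where $\delta_i(N)=\tfrac32(\delta(N)+\delta^{(0)}(N))(3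^i-1)+3^{i+1}\delta(N)$.
   Context: $\mathbb V(p,q)=\sum_x|p(x)-q(x)|$, $\log$ base 2; lengths such as $r_X$ and numbers of bits are assumed to be integers. Two-universal hash families are in the sense of Carter–Wegman. *)

theory Defs
  imports "HOL-Probability.Probability"
begin

definition ent :: "'a pmf \<Rightarrow> real" where
  "ent p = - (\<Sum>x\<in>set_pmf p. pmf p x * log 2 (pmf p x))"

definition vdist :: "'a pmf \<Rightarrow> 'a pmf \<Rightarrow> real" where
  "vdist p q = (\<Sum>\<^sub>\<infinity>x. \<bar>pmf p x - pmf q x\<bar>)"

fun list_pmf :: "'a pmf list \<Rightarrow> 'a list pmf" where
  "list_pmf [] = return_pmf []"
| "list_pmf (p # ps) = do { x \<leftarrow> p; xs \<leftarrow> list_pmf ps; return_pmf (x # xs) }"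

definition iid :: "nat \<Rightarrow> 'a pmf \<Rightarrow> 'a list pmf" where
  "iid n p = list_pmf (replicate n p)"

definition unif_bits :: "nat \<Rightarrow> bool list pmf" where
  "unif_bits n = pmf_of_set {s. length s = n}"

definition channel :: "(bool \<Rightarrow> bool \<Rightarrow> 'z pmf) \<Rightarrow> bool list \<Rightarrow> bool list \<Rightarrow> 'z list pmf" where
  "channel W xs ys = list_pmf (map (\<lambda>(a, b). W a b) (zip xs ys))"

definition two_universal :: "nat \<Rightarrow> nat \<Rightarrow> (bool list \<Rightarrow> bool list) set \<Rightarrow> bool" where
  "two_universal n r H \<longleftrightarrow> finite H \<and> H \<noteq> {} \<and>
     (\<forall>h\<in>H. \<forall>x. length x = n \<longrightarrow> length (h x) = r) \<and>
     (\<forall>x x'. length x = n \<and> length x' = n \<and> x \<noteq> x' \<longrightarrow>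
        real (card {h\<in>H. h x = h x'}) \<le> real (card H) / 2 ^ r)"

text \<open>Bits are booleans (True = 1), so max on bits is disjunction.
  A single-letter sample is the tuple (U, V, X, Y, Z).\<close>
definition q1 :: "(bool \<Rightarrow> bool \<Rightarrow> 'z pmf) \<Rightarrow> bool pmf \<Rightarrow> bool pmf \<Rightarrow> bool pmf
    \<Rightarrow> (bool \<times> bool \<times> bool \<times> bool \<times> 'z) pmf" where
  "q1 W qU qV qX = do { u \<leftarrow> qU; v \<leftarrow> qV; x \<leftarrow> qX; z \<leftarrow> W x (u \<or> v);
                        return_pmf (u, v, x, u \<or> v, z) }"

type_synonym 'z block = "bool list \<times> bool list \<times> bool list \<times> bool list \<times> 'z list"

definition qN :: "nat \<Rightarrow> (bool \<times> bool \<times> bool \<times> bool \<times> 'z) pmf \<Rightarrow> 'z block pmf" where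
  "qN n q = map_pmf (\<lambda>l. (map (\<lambda>(u,v,x,y,z). u) l, map (\<lambda>(u,v,x,y,z). v) l,
                          map (\<lambda>(u,v,x,y,z). x) l, map (\<lambda>(u,v,x,y,z). y) l,
                          map (\<lambda>(u,v,x,y,z). z) l)) (iid n q)"

type_synonym hashes = "(bool list \<Rightarrow> bool list) \<times> (bool list \<Rightarrow> bool list) \<times> (bool list \<Rightarrow> bool list)"

definition finish_block :: "(bool \<Rightarrow> bool \<Rightarrow> 'z pmf) \<Rightarrow> bool list \<Rightarrow> bool list \<Rightarrow> bool list
    \<Rightarrow> 'z block pmf" where
  "finish_block W x u v = (let y = map2 (\<or>) u v in
     do { z \<leftarrow> channel W x y; return_pmf (u, v, x, y, z) })"

definition first_block :: "(bool \<Rightarrow> bool \<Rightarrow> 'z pmf) \<Rightarrow>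
    (bool list \<Rightarrow> bool list) \<Rightarrow> (bool list \<Rightarrow> bool list) \<Rightarrow> (bool list \<Rightarrow> bool list) \<Rightarrow>
    nat \<Rightarrow> nat \<Rightarrow> nat \<Rightarrow> 'z block pmf" where
  "first_block W eX eU eV lX lU lV =
     do { e \<leftarrow> unif_bits lX; d \<leftarrow> unif_bits lU; f \<leftarrow> unif_bits lV;
          finish_block W (eX e) (eU d) (eV f) }"

definition next_block :: "(bool \<Rightarrow> bool \<Rightarrow> 'z pmf) \<Rightarrow>
    (bool list \<Rightarrow> bool list) \<Rightarrow> (bool list \<Rightarrow> bool list) \<Rightarrow> (bool list \<Rightarrow> bool list) \<Rightarrow>
    nat \<Rightarrow> nat \<Rightarrow> nat \<Rightarrow> hashes \<Rightarrow> 'z block \<Rightarrow> 'z block pmf" where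
  "next_block W eX eU eV mX mU mV h b =
     (case h of (gX, gU, gV) \<Rightarrow> case b of (u, v, x, y, z) \<Rightarrow>
       do { e \<leftarrow> unif_bits mX; d \<leftarrow> unif_bits mU; f \<leftarrow> unif_bits mV;
            finish_block W (eX (gX x @ e)) (eU (gU u @ d)) (eV (gV v @ f)) })"

fun scheme :: "(bool \<Rightarrow> bool \<Rightarrow> 'z pmf) \<Rightarrow>
    (bool list \<Rightarrow> bool list) \<Rightarrow> (bool list \<Rightarrow> bool list) \<Rightarrow> (bool list \<Rightarrow> bool list) \<Rightarrow>
    nat \<Rightarrow> nat \<Rightarrow> nat \<Rightarrow> nat \<Rightarrow> nat \<Rightarrow> nat \<Rightarrow>
    (bool list \<Rightarrow> bool list) set \<Rightarrow> (bool list \<Rightarrow> bool list) set \<Rightarrow> (bool list \<Rightarrow> bool list) set \<Rightarrow>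
    nat \<Rightarrow> (hashes \<times> 'z block list) pmf" where
  "scheme W eX eU eV lX lU lV mX mU mV HX HU HV 0 =
     do { gX \<leftarrow> pmf_of_set HX; gU \<leftarrow> pmf_of_set HU; gV \<leftarrow> pmf_of_set HV;
          return_pmf ((gX, gU, gV), []) }"
| "scheme W eX eU eV lX lU lV mX mU mV HX HU HV (Suc n) =
     do { (h, bs) \<leftarrow> scheme W eX eU eV lX lU lV mX mU mV HX HU HV n;
          b \<leftarrow> (if bs = [] then first_block W eX eU eV lX lU lV
                else next_block W eX eU eV mX mU mV h (last bs));
          return_pmf (h, bs @ [b]) }"

end

theory Submission
  imports Defs
begin

text \<open>Given the hash functions, the X-, U- and V-components of the scheme are three independent
  Markov chains x' = e (g x @ d) with fresh uniform d, and a block is assembled from them exactly as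
  q^N is assembled from i.i.d. X^N, U^N and V^N. So the distance of block i from q^N is at most
  the sum of the distances of the three hash-averaged chains from the i.i.d. laws. A chain step
  costs the encoder error \<delta>, the distance of the previous output from i.i.d., and the expected
  distance of the hashed i.i.d. string from uniform bits. By a Chernoff bound the i.i.d. string is
  within 1/N of a source of min-entropy N (H - \<delta>A) - 1, and the hash length is at most
  N (H - \<delta>A - \<xi>) because conditioning does not increase entropy; the leftover hash lemma then
  bounds the last term by \<delta>0. This gives the linear bound 3 (i \<delta> + (i - 1) \<delta>0), which lies
  below the stated one.\<close>

section \<open>Variational distance\<close>

lemma vdist_eq_integral:
  "vdist p q = (\<integral>x. \<bar>pmf p x - pmf q x\<bar> \<partial>count_space UNIV)"
proof -
  have "integrable (count_space UNIV) (\<lambda>x. \<bar>pmf p x - pmf q x\<bar>)"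
    by (intro integrable_abs Bochner_Integration.integrable_diff integrable_pmf)
  then have "infsetsum (\<lambda>x. \<bar>pmf p x - pmf q x\<bar>) UNIV = infsum (\<lambda>x. \<bar>pmf p x - pmf q x\<bar>) UNIV"
    by (intro infsetsum_infsum) (simp add: Infinite_Set_Sum.abs_summable_on_def)
  then show ?thesis
    unfolding vdist_def infsetsum_def by simp
qed

lemma vdist_eq_sum:
  assumes "finite A" "set_pmf p \<subseteq> A" "set_pmf q \<subseteq> A"
  shows "vdist p q = (\<Sum>x\<in>A. \<bar>pmf p x - pmf q x\<bar>)"
proof -
  have "vdist p q = infsum (\<lambda>x. \<bar>pmf p x - pmf q x\<bar>) A"
    unfolding vdist_def
  proof (rule infsum_cong_neutral)
    show "\<bar>pmf p x - pmf q x\<bar> = 0" if "x \<in> UNIV - A" for x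
    proof -
      have "x \<notin> set_pmf p" "x \<notin> set_pmf q"
        using that assms(2,3) by auto
      then show ?thesis
        by (simp add: set_pmf_iff)
    qed
  qed auto
  then show ?thesis
    using assms(1) by simp
qed

lemma vdist_nonneg: "0 \<le> vdist p q"
  unfolding vdist_eq_integral by simp

lemma vdist_self [simp]: "vdist p p = 0"
  unfolding vdist_def by simp

lemma expectation_pmf_eq_integral:
  fixes f :: "'a \<Rightarrow> real"
  shows "measure_pmf.expectation p f = (\<integral>x. pmf p x * f x \<partial>count_space UNIV)"
  unfolding measure_pmf_eq_density by (simp add: integral_density)

lemma integrable_pmf_mult_bounded:
  fixes f :: "'a \<Rightarrow> real"
  assumes "\<And>x. \<bar>f x\<bar> \<le> 1"
  shows "integrable (count_space UNIV) (\<lambda>x. pmf p x * f x)"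
proof (rule Bochner_Integration.integrable_bound[OF integrable_pmf])
  show "AE x in count_space UNIV. norm (pmf p x * f x) \<le> norm (pmf p x)"
    using assms by (intro AE_I2) (simp add: abs_mult mult_left_le)
qed simp

lemma abs_expectation_le_1:
  fixes f :: "'a \<Rightarrow> real"
  assumes "\<And>x. \<bar>f x\<bar> \<le> 1"
  shows "\<bar>measure_pmf.expectation p f\<bar> \<le> 1"
proof -
  have "\<bar>measure_pmf.expectation p f\<bar> \<le> measure_pmf.expectation p (\<lambda>x. \<bar>f x\<bar>)"
    by (rule integral_abs_bound)
  also have "\<dots> \<le> measure_pmf.expectation p (\<lambda>x. 1)"
    using assms by (intro integral_mono measure_pmf.integrable_const_bound[where B=1]) auto
  finally show ?thesis by simp
qed

lemma expectation_diff_le_vdist: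
  fixes f :: "'a \<Rightarrow> real"
  assumes "\<And>x. \<bar>f x\<bar> \<le> 1"
  shows "measure_pmf.expectation p f - measure_pmf.expectation q f \<le> vdist p q"
proof -
  note int = integrable_pmf_mult_bounded[OF assms]
  have "measure_pmf.expectation p f - measure_pmf.expectation q f
      = (\<integral>x. (pmf p x - pmf q x) * f x \<partial>count_space UNIV)"
    using int[of p] int[of q] by (simp add: expectation_pmf_eq_integral left_diff_distrib)
  also have "\<dots> \<le> (\<integral>x. \<bar>pmf p x - pmf q x\<bar> \<partial>count_space UNIV)"
  proof (rule integral_mono)
    show "integrable (count_space UNIV) (\<lambda>x. (pmf p x - pmf q x) * f x)"
      using int[of p] int[of q] by (simp add: left_diff_distrib)
    show "integrable (count_space UNIV) (\<lambda>x. \<bar>pmf p x - pmf q x\<bar>)"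
      by (intro integrable_abs Bochner_Integration.integrable_diff integrable_pmf)
    show "(pmf p x - pmf q x) * f x \<le> \<bar>pmf p x - pmf q x\<bar>" for x
    proof -
      have "(pmf p x - pmf q x) * f x \<le> \<bar>pmf p x - pmf q x\<bar> * \<bar>f x\<bar>"
        by (metis abs_ge_self abs_mult)
      also have "\<dots> \<le> \<bar>pmf p x - pmf q x\<bar>"
        using assms[of x] by (simp add: mult_left_le)
      finally show ?thesis .
    qed
  qed
  finally show ?thesis
    by (simp add: vdist_eq_integral)
qed

text \<open>Together with expectation_diff_le_vdist this describes vdist as the maximum of
  E_p f - E_q f over all f with values in [-1, 1]; the contraction properties below follow from it.\<close>

lemma vdist_eq_expectation_sgn:
  "vdist p q = measure_pmf.expectation p (\<lambda>x. sgn (pmf p x - pmf q x))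
             - measure_pmf.expectation q (\<lambda>x. sgn (pmf p x - pmf q x))"
proof -
  let ?s = "\<lambda>x. sgn (pmf p x - pmf q x)"
  have sgn_le: "\<bar>?s x\<bar> \<le> 1" for x
    by (simp add: abs_sgn_eq)
  note int = integrable_pmf_mult_bounded[of ?s, OF sgn_le]
  have "measure_pmf.expectation p ?s - measure_pmf.expectation q ?s
      = (\<integral>x. (pmf p x - pmf q x) * ?s x \<partial>count_space UNIV)"
    using int[of p] int[of q] by (simp add: expectation_pmf_eq_integral left_diff_distrib)
  also have "\<dots> = (\<integral>x. \<bar>pmf p x - pmf q x\<bar> \<partial>count_space UNIV)"
    by (simp add: abs_sgn mult.commute)
  finally show ?thesis
    by (simp add: vdist_eq_integral)
qed

lemma vdist_triangle: "vdist p r \<le> vdist p q + vdist q r"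
proof -
  let ?s = "\<lambda>x. sgn (pmf p x - pmf r x)"
  have "\<bar>?s x\<bar> \<le> 1" for x
    by (simp add: abs_sgn_eq)
  then have "(measure_pmf.expectation p ?s - measure_pmf.expectation q ?s)
      + (measure_pmf.expectation q ?s - measure_pmf.expectation r ?s) \<le> vdist p q + vdist q r"
    by (intro add_mono expectation_diff_le_vdist)
  then show ?thesis
    by (simp add: vdist_eq_expectation_sgn[of p r])
qed

lemma vdist_le_2: "vdist p q \<le> 2"
proof -
  let ?s = "\<lambda>x. sgn (pmf p x - pmf q x)"
  have s: "\<bar>?s x\<bar> \<le> 1" for x
    by (simp add: abs_sgn_eq)
  have "\<bar>measure_pmf.expectation p ?s\<bar> \<le> 1" "\<bar>measure_pmf.expectation q ?s\<bar> \<le> 1"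
    by (intro abs_expectation_le_1 s)+
  then show ?thesis
    unfolding vdist_eq_expectation_sgn[of p] by linarith
qed

lemma expectation_bind_pmf:
  fixes f :: "'b \<Rightarrow> real"
  assumes "\<And>x. \<bar>f x\<bar> \<le> 1"
  shows "measure_pmf.expectation (bind_pmf p K) f
       = measure_pmf.expectation p (\<lambda>x. measure_pmf.expectation (K x) f)"
  unfolding measure_pmf_bind
proof (rule integral_bind[where K="count_space UNIV" and B=1 and B'=1])
  show "(\<lambda>x. measure_pmf (K x)) \<in> measurable (measure_pmf p) (subprob_algebra (count_space UNIV))"
    by (simp add: measure_pmf_in_subprob_algebra)
  show "AE x in measure_pmf p. emeasure (measure_pmf (K x)) (space (measure_pmf (K x))) \<le> ennreal 1"
    by (simp add: measure_pmf.emeasure_space_1)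
qed (use assms measure_pmf.finite_measure_axioms in auto)

lemma vdist_bind_pmf_left: "vdist (bind_pmf p K) (bind_pmf q K) \<le> vdist p q"
proof -
  let ?s = "\<lambda>x. sgn (pmf (bind_pmf p K) x - pmf (bind_pmf q K) x)"
  have s: "\<bar>?s x\<bar> \<le> 1" for x
    by (simp add: abs_sgn_eq)
  show ?thesis
    unfolding vdist_eq_expectation_sgn[of "bind_pmf p K"] expectation_bind_pmf[OF s]
    by (intro expectation_diff_le_vdist abs_expectation_le_1 s)
qed

lemma vdist_map_pmf: "vdist (map_pmf f p) (map_pmf f q) \<le> vdist p q"
  unfolding map_pmf_def by (rule vdist_bind_pmf_left)

lemma vdist_bind_pmf_right:
  "vdist (bind_pmf p K) (bind_pmf p L) \<le> measure_pmf.expectation p (\<lambda>x. vdist (K x) (L x))"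
proof -
  let ?s = "\<lambda>x. sgn (pmf (bind_pmf p K) x - pmf (bind_pmf p L) x)"
  have s: "\<bar>?s x\<bar> \<le> 1" for x
    by (simp add: abs_sgn_eq)
  have int: "integrable p (\<lambda>x. measure_pmf.expectation (M x) ?s)" for M
    by (rule measure_pmf.integrable_const_bound[where B=1])
      (auto intro!: abs_expectation_le_1 s)
  have "vdist (bind_pmf p K) (bind_pmf p L)
      = measure_pmf.expectation p (\<lambda>x. measure_pmf.expectation (K x) ?s - measure_pmf.expectation (L x) ?s)"
    unfolding vdist_eq_expectation_sgn[of "bind_pmf p K"] expectation_bind_pmf[OF s]
    using int by simp
  also have "\<dots> \<le> measure_pmf.expectation p (\<lambda>x. vdist (K x) (L x))"
  proof (rule integral_mono_AE')
    show "integrable p (\<lambda>x. vdist (K x) (L x))"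
      by (rule measure_pmf.integrable_const_bound[where B=2]) (auto simp: vdist_nonneg vdist_le_2)
  qed (auto intro!: AE_I2 expectation_diff_le_vdist s vdist_nonneg)
  finally show ?thesis .
qed

lemma vdist_bind_pmf:
  assumes "\<And>x. x \<in> set_pmf q \<Longrightarrow> vdist (K x) (L x) \<le> c"
  shows "vdist (bind_pmf p K) (bind_pmf q L) \<le> vdist p q + c"
proof -
  have "measure_pmf.expectation q (\<lambda>x. vdist (K x) (L x)) \<le> measure_pmf.expectation q (\<lambda>x. c)"
  proof (rule integral_mono_AE)
    show "integrable q (\<lambda>x. vdist (K x) (L x))"
      by (rule measure_pmf.integrable_const_bound[where B=2]) (auto simp: vdist_nonneg vdist_le_2)
  qed (use assms in \<open>simp_all add: AE_measure_pmf_iff\<close>)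
  then have "vdist (bind_pmf q K) (bind_pmf q L) \<le> c"
    using vdist_bind_pmf_right[of q K L] by simp
  then show ?thesis
    using vdist_triangle[where p="bind_pmf p K" and q="bind_pmf q K" and r="bind_pmf q L"]
      vdist_bind_pmf_left[of p K q]
    by linarith
qed

lemma vdist_bind_pmf_mixture_left:
  "vdist (bind_pmf p K) q \<le> measure_pmf.expectation p (\<lambda>x. vdist (K x) q)"
  using vdist_bind_pmf_right[of p K "\<lambda>_. q"] by simp

lemma vdist_bind_pmf3:
  "vdist (bind_pmf A (\<lambda>x. bind_pmf B (\<lambda>u. bind_pmf C (\<lambda>v. F x u v))))
         (bind_pmf A' (\<lambda>x. bind_pmf B' (\<lambda>u. bind_pmf C' (\<lambda>v. F x u v))))
   \<le> vdist A A' + vdist B B' + vdist C C'"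
proof -
  have "vdist (bind_pmf C (F x u)) (bind_pmf C' (F x u)) \<le> vdist C C' + 0" for x u
    by (rule vdist_bind_pmf) simp
  then have "vdist (bind_pmf B (\<lambda>u. bind_pmf C (F x u))) (bind_pmf B' (\<lambda>u. bind_pmf C' (F x u)))
      \<le> vdist B B' + (vdist C C' + 0)" for x
    by (rule vdist_bind_pmf)
  then have "vdist (bind_pmf A (\<lambda>x. bind_pmf B (\<lambda>u. bind_pmf C (F x u))))
      (bind_pmf A' (\<lambda>x. bind_pmf B' (\<lambda>u. bind_pmf C' (F x u))))
      \<le> vdist A A' + (vdist B B' + (vdist C C' + 0))"
    by (rule vdist_bind_pmf)
  then show ?thesis
    by (simp add: add.assoc)
qed

section \<open>Uniform bits and i.i.d. strings\<close>

lemma finite_lists_length_UNIV [simp]: "finite {xs :: 'a::finite list. length xs = n}"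
  using finite_lists_length_eq[of "UNIV :: 'a set" n] by simp

lemma card_lists_length_UNIV [simp]: "card {xs :: 'a::finite list. length xs = n} = CARD('a) ^ n"
  using card_lists_length_eq[of "UNIV :: 'a set" n] by simp

lemma ex_list_length [simp]: "\<exists>xs :: 'a list. length xs = n"
  by (rule exI[where x="replicate n undefined"]) simp

lemma set_pmf_unif_bits [simp]: "set_pmf (unif_bits n) = {xs. length xs = n}"
  unfolding unif_bits_def by (rule set_pmf_of_set) simp_all

lemma pmf_unif_bits: "pmf (unif_bits n) xs = (if length xs = n then 1 / 2 ^ n else 0)"
  unfolding unif_bits_def by (subst pmf_of_set) auto

lemma pair_pmf_of_set:
  assumes "finite A" "A \<noteq> {}" "finite B" "B \<noteq> {}"
  shows "pair_pmf (pmf_of_set A) (pmf_of_set B) = pmf_of_set (A \<times> B)"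
proof (rule pmf_eqI)
  fix z :: "'a \<times> 'b"
  show "pmf (pair_pmf (pmf_of_set A) (pmf_of_set B)) z = pmf (pmf_of_set (A \<times> B)) z"
    using assms by (cases z) (simp add: pmf_pair card_cartesian_product indicator_def)
qed

lemma unif_bits_add:
  "unif_bits (r + m) = bind_pmf (unif_bits r) (\<lambda>a. map_pmf ((@) a) (unif_bits m))"
proof -
  let ?R = "{xs :: bool list. length xs = r}" and ?M = "{xs :: bool list. length xs = m}"
  have pair: "pair_pmf (unif_bits r) (unif_bits m) = pmf_of_set (?R \<times> ?M)"
    unfolding unif_bits_def by (rule pair_pmf_of_set) simp_all
  have "bind_pmf (unif_bits r) (\<lambda>a. map_pmf ((@) a) (unif_bits m))
      = map_pmf (\<lambda>(a, d). a @ d) (pair_pmf (unif_bits r) (unif_bits m))"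
    by (simp add: pair_pmf_def map_bind_pmf bind_map_pmf map_pmf_def[symmetric] pmf.map_comp o_def)
  also have "\<dots> = map_pmf (\<lambda>(a, d). a @ d) (pmf_of_set (?R \<times> ?M))"
    unfolding pair ..
  also have "\<dots> = pmf_of_set ((\<lambda>(a, d). a @ d) ` (?R \<times> ?M))"
    by (rule map_pmf_of_set_inj) (auto simp: inj_on_def)
  also have "(\<lambda>(a, d). a @ d) ` (?R \<times> ?M) = {xs. length xs = r + m}"
  proof (intro equalityI subsetI)
    fix xs :: "bool list"
    assume "xs \<in> {xs. length xs = r + m}"
    then have "xs = (\<lambda>(a, d). a @ d) (take r xs, drop r xs)" "(take r xs, drop r xs) \<in> ?R \<times> ?M"
      by auto
    then show "xs \<in> (\<lambda>(a, d). a @ d) ` (?R \<times> ?M)"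
      by blast
  qed auto
  finally show ?thesis
    by (simp add: unif_bits_def)
qed

lemma iid_Suc: "iid (Suc n) p = bind_pmf p (\<lambda>a. bind_pmf (iid n p) (\<lambda>l. return_pmf (a # l)))"
  by (simp add: iid_def)

lemma pmf_iid: "pmf (iid n p) xs = (if length xs = n then prod_list (map (pmf p) xs) else 0)"
proof (induction n arbitrary: xs)
  case 0
  then show ?case
    by (simp add: iid_def)
next
  case (Suc n)
  have iid_Suc_pair: "iid (Suc n) p = map_pmf (\<lambda>(x, xs). x # xs) (pair_pmf p (iid n p))"
    by (simp add: iid_Suc pair_pmf_def map_bind_pmf)
  show ?case
  proof (cases xs)
    case Nil
    have "pmf (iid (Suc n) p) [] = 0"
      unfolding iid_Suc_pair by (rule pmf_map_outside) auto
    then show ?thesis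
      using Nil by simp
  next
    case (Cons y ys)
    have inj: "inj (\<lambda>(x :: 'a, xs). x # xs)"
      by (auto simp: inj_on_def)
    have "pmf (iid (Suc n) p) (y # ys) = pmf (pair_pmf p (iid n p)) (y, ys)"
      unfolding iid_Suc_pair using pmf_map_inj'[OF inj, of _ "(y, ys)"] by simp
    then show ?thesis
      using Cons Suc.IH[of ys] by (simp add: pmf_pair)
  qed
qed

lemma set_pmf_iid: "set_pmf (iid n p) \<subseteq> {xs. length xs = n}"
  by (auto simp: set_pmf_iff pmf_iid split: if_splits)

lemma sum_lists_length_prod_list:
  fixes f :: "'a::finite \<Rightarrow> 'b::comm_semiring_1"
  shows "(\<Sum>xs\<in>{xs. length xs = n}. prod_list (map f xs)) = (\<Sum>x\<in>UNIV. f x) ^ n"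
proof (induction n)
  case 0
  then show ?case by simp
next
  case (Suc n)
  have lists_Suc: "{xs :: 'a list. length xs = Suc n} = (\<lambda>(x, xs). x # xs) ` (UNIV \<times> {xs. length xs = n})"
    by (auto simp: length_Suc_conv image_iff)
  have "(\<Sum>xs\<in>{xs. length xs = Suc n}. prod_list (map f xs))
      = (\<Sum>(x, xs)\<in>UNIV \<times> {xs. length xs = n}. f x * prod_list (map f xs))"
    unfolding lists_Suc by (subst sum.reindex) (auto simp: inj_on_def case_prod_beta)
  also have "\<dots> = (\<Sum>x\<in>UNIV. f x) * (\<Sum>xs\<in>{xs. length xs = n}. prod_list (map f xs))"
    by (simp add: sum.cartesian_product[symmetric] sum_product)
  finally show ?case
    using Suc by simp
qed

lemma pmf_map_pmf_eq_sum:
  assumes "finite D" "set_pmf P \<subseteq> D"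
  shows "pmf (map_pmf g P) y = (\<Sum>x\<in>D. if g x = y then pmf P x else 0)"
proof -
  have "pmf (map_pmf g P) y = measure_pmf.expectation P (indicator (g -` {y}))"
    by (simp add: pmf_map)
  also have "\<dots> = (\<Sum>x\<in>D. indicator (g -` {y}) x * pmf P x)"
    by (rule integral_measure_pmf_real) (use assms in auto)
  also have "\<dots> = (\<Sum>x\<in>D. if g x = y then pmf P x else 0)"
    by (intro sum.cong) auto
  finally show ?thesis .
qed

lemma sum_pmf_map_pmf_square:
  assumes "finite D" "set_pmf P \<subseteq> D" "finite R" "g ` D \<subseteq> R"
  shows "(\<Sum>y\<in>R. (pmf (map_pmf g P) y)\<^sup>2)
       = (\<Sum>x\<in>D. \<Sum>x'\<in>D. if g x = g x' then pmf P x * pmf P x' else 0)"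
proof -
  let ?t = "\<lambda>x y. if g x = y then pmf P x else 0"
  have "(\<Sum>y\<in>R. (pmf (map_pmf g P) y)\<^sup>2) = (\<Sum>y\<in>R. \<Sum>x\<in>D. \<Sum>x'\<in>D. ?t x y * ?t x' y)"
    by (simp add: pmf_map_pmf_eq_sum[OF assms(1,2)] power2_eq_square sum_product)
  also have "\<dots> = (\<Sum>x\<in>D. \<Sum>x'\<in>D. \<Sum>y\<in>R. ?t x y * ?t x' y)"
    by (subst sum.swap) (subst (2) sum.swap, rule refl)
  also have "\<dots> = (\<Sum>x\<in>D. \<Sum>x'\<in>D. if g x = g x' then pmf P x * pmf P x' else 0)"
  proof (intro sum.cong refl)
    fix x x'
    assume "x \<in> D"
    then have "g x \<in> R"
      using assms(4) by auto
    have "(\<Sum>y\<in>R. ?t x y * ?t x' y)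
        = (\<Sum>y\<in>R. if y = g x then (if g x' = g x then pmf P x * pmf P x' else 0) else 0)"
      by (rule sum.cong) auto
    also have "\<dots> = (if g x = g x' then pmf P x * pmf P x' else 0)"
      using assms(3) \<open>g x \<in> R\<close> by (simp add: sum.delta eq_commute)
    finally show "(\<Sum>y\<in>R. ?t x y * ?t x' y) = (if g x = g x' then pmf P x * pmf P x' else 0)" .
  qed
  finally show ?thesis .
qed

section \<open>Leftover hash lemma\<close>

lemma vdist_unif_bits_square_le:
  assumes "finite D" "set_pmf P \<subseteq> D" "\<And>x. x \<in> D \<Longrightarrow> length (g x) = r"
  shows "(vdist (map_pmf g P) (unif_bits r))\<^sup>2
         \<le> 2 ^ r * (\<Sum>y\<in>{y. length y = r}. (pmf (map_pmf g P) y)\<^sup>2) - 1"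
proof -
  let ?R = "{y :: bool list. length y = r}"
  let ?a = "\<lambda>y. pmf (map_pmf g P) y"
  have supp: "set_pmf (map_pmf g P) \<subseteq> ?R"
    using assms(2,3) by auto
  have "vdist (map_pmf g P) (unif_bits r) = (\<Sum>y\<in>?R. \<bar>?a y - 1 / 2 ^ r\<bar> * 1)"
    using supp by (subst vdist_eq_sum[of ?R]) (auto simp: pmf_unif_bits)
  then have "(vdist (map_pmf g P) (unif_bits r))\<^sup>2 \<le> (\<Sum>y\<in>?R. \<bar>?a y - 1 / 2 ^ r\<bar>\<^sup>2) * (\<Sum>y\<in>?R. 1\<^sup>2)"
    by (simp only: Cauchy_Schwarz_ineq_sum)
  also have "\<dots> = 2 ^ r * (\<Sum>y\<in>?R. (?a y)\<^sup>2 - 2 * (1 / 2 ^ r) * ?a y + (1 / 2 ^ r)\<^sup>2)"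
    by (simp add: power2_diff algebra_simps)
  also have "\<dots> = 2 ^ r * ((\<Sum>y\<in>?R. (?a y)\<^sup>2) - 2 * (1 / 2 ^ r) * (\<Sum>y\<in>?R. ?a y) + 2 ^ r * (1 / 2 ^ r)\<^sup>2)"
    by (simp add: sum.distrib sum_subtractf sum_distrib_left)
  also have "(\<Sum>y\<in>?R. ?a y) = 1"
    by (rule sum_pmf_eq_1[OF _ supp]) simp
  also have "2 ^ r * ((\<Sum>y\<in>?R. (?a y)\<^sup>2) - 2 * (1 / 2 ^ r) * 1 + 2 ^ r * (1 / 2 ^ r)\<^sup>2)
      = 2 ^ r * (\<Sum>y\<in>?R. (?a y)\<^sup>2) - 1"
    by (simp add: power2_eq_square field_simps)
  finally show ?thesis .
qed

lemma two_universal_card_collisions_le: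
  assumes "two_universal N r H" "length x = N" "length x' = N"
  shows "real (card {h\<in>H. h x = h x'}) \<le> real (card H) * ((if x = x' then 1 else 0) + 1 / 2 ^ r)"
proof (cases "x = x'")
  case True
  have "card {h\<in>H. h x = h x'} \<le> card H"
    using assms(1) unfolding two_universal_def by (intro card_mono) auto
  then show ?thesis
    using True by (simp add: distrib_left)
next
  case False
  then show ?thesis
    using assms unfolding two_universal_def by simp
qed

lemma sum_collision_prob_two_universal_le:
  assumes "two_universal N r H" and supp: "set_pmf P \<subseteq> {x. length x = N}"
  shows "(\<Sum>h\<in>H. \<Sum>y\<in>{y. length y = r}. (pmf (map_pmf h P) y)\<^sup>2)
         \<le> real (card H) * ((\<Sum>x\<in>{x. length x = N}. (pmf P x)\<^sup>2) + 1 / 2 ^ r)"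
proof -
  let ?D = "{x :: bool list. length x = N}"
  let ?c = "\<lambda>x x'. real (card {h\<in>H. h x = h x'})"
  have fin: "finite H"
    using assms(1) unfolding two_universal_def by simp
  have "(\<Sum>h\<in>H. \<Sum>y\<in>{y. length y = r}. (pmf (map_pmf h P) y)\<^sup>2)
      = (\<Sum>h\<in>H. \<Sum>x\<in>?D. \<Sum>x'\<in>?D. if h x = h x' then pmf P x * pmf P x' else 0)"
    using assms(1) unfolding two_universal_def
    by (intro sum.cong[OF refl] sum_pmf_map_pmf_square[OF _ supp]) auto
  also have "\<dots> = (\<Sum>x\<in>?D. \<Sum>x'\<in>?D. \<Sum>h\<in>H. if h x = h x' then pmf P x * pmf P x' else 0)"
    by (subst sum.swap) (subst (2) sum.swap, rule refl)
  also have "\<dots> = (\<Sum>x\<in>?D. \<Sum>x'\<in>?D. pmf P x * pmf P x' * ?c x x')"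
    using fin by (intro sum.cong refl) (simp add: sum.inter_filter[symmetric])
  also have "\<dots> \<le> (\<Sum>x\<in>?D. \<Sum>x'\<in>?D. pmf P x * pmf P x' * (card H * ((if x = x' then 1 else 0) + 1 / 2 ^ r)))"
    using two_universal_card_collisions_le[OF assms(1)]
    by (intro sum_mono mult_left_mono) auto
  also have "\<dots> = (\<Sum>x\<in>?D. \<Sum>x'\<in>?D. (if x = x' then card H * (pmf P x * pmf P x') else 0)
                                    + card H / 2 ^ r * (pmf P x * pmf P x'))"
    by (intro sum.cong refl) (auto simp: algebra_simps)
  also have "\<dots> = card H * ((\<Sum>x\<in>?D. (pmf P x)\<^sup>2)
                        + 1 / 2 ^ r * ((\<Sum>x\<in>?D. pmf P x) * (\<Sum>x'\<in>?D. pmf P x')))"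
    by (simp add: sum.distrib sum_distrib_left sum_product power2_eq_square algebra_simps)
  also have "(\<Sum>x\<in>?D. pmf P x) = 1"
    by (rule sum_pmf_eq_1[OF _ supp]) simp
  finally show ?thesis
    by simp
qed

lemma mean_le_sqrt_of_sum_squares_le:
  fixes f :: "'a \<Rightarrow> real"
  assumes H: "finite H" "H \<noteq> {}" and squares: "(\<Sum>h\<in>H. (f h)\<^sup>2) \<le> real (card H) * c"
  shows "(\<Sum>h\<in>H. f h) / real (card H) \<le> sqrt c"
proof -
  let ?K = "real (card H)"
  have K: "0 < ?K"
    using H by (simp add: card_gt_0_iff)
  have "0 \<le> ?K * c"
    using squares by (meson order_trans sum_nonneg zero_le_power2)
  then have c: "0 \<le> c"
    using K by (simp add: zero_le_mult_iff)
  have "(\<Sum>h\<in>H. f h * 1)\<^sup>2 \<le> (\<Sum>h\<in>H. (f h)\<^sup>2) * (\<Sum>h\<in>H. 1\<^sup>2)"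
    by (rule Cauchy_Schwarz_ineq_sum)
  also have "\<dots> \<le> ?K * c * ?K"
    using squares by (simp add: mult_right_mono)
  also have "\<dots> = (?K * sqrt c)\<^sup>2"
    using c by (simp add: power_mult_distrib power2_eq_square)
  finally have "(\<Sum>h\<in>H. f h)\<^sup>2 \<le> (?K * sqrt c)\<^sup>2"
    by simp
  then have "(\<Sum>h\<in>H. f h) \<le> ?K * sqrt c"
    by (rule power2_le_imp_le) (use K c in simp)
  then show ?thesis
    using K by (simp add: divide_le_eq mult.commute)
qed

lemma leftover_hash:
  assumes tu: "two_universal N r H" and supp: "set_pmf P \<subseteq> {x. length x = N}"
    and max: "\<And>x. pmf P x \<le> m"
  shows "measure_pmf.expectation (pmf_of_set H) (\<lambda>h. vdist (map_pmf h P) (unif_bits r))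
         \<le> sqrt (2 ^ r * m)"
proof -
  let ?D = "{x :: bool list. length x = N}"
  let ?V = "\<lambda>h. vdist (map_pmf h P) (unif_bits r)"
  let ?K = "real (card H)"
  have H: "finite H" "H \<noteq> {}" and len: "\<And>h x. h \<in> H \<Longrightarrow> length x = N \<Longrightarrow> length (h x) = r"
    using tu unfolding two_universal_def by auto
  have "(\<Sum>x\<in>?D. (pmf P x)\<^sup>2) \<le> (\<Sum>x\<in>?D. m * pmf P x)"
    using max by (intro sum_mono) (simp add: power2_eq_square mult_right_mono)
  also have "\<dots> = m"
    using sum_pmf_eq_1[OF _ supp] by (simp add: sum_distrib_left[symmetric])
  finally have collision: "(\<Sum>x\<in>?D. (pmf P x)\<^sup>2) \<le> m" .
  have "(\<Sum>h\<in>H. (?V h)\<^sup>2) \<le> (\<Sum>h\<in>H. 2 ^ r * (\<Sum>y\<in>{y. length y = r}. (pmf (map_pmf h P) y)\<^sup>2) - 1)"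
    using len by (intro sum_mono vdist_unif_bits_square_le[OF _ supp]) auto
  also have "\<dots> = 2 ^ r * (\<Sum>h\<in>H. \<Sum>y\<in>{y. length y = r}. (pmf (map_pmf h P) y)\<^sup>2) - ?K"
    by (simp add: sum_subtractf sum_distrib_left)
  also have "\<dots> \<le> 2 ^ r * (?K * ((\<Sum>x\<in>?D. (pmf P x)\<^sup>2) + 1 / 2 ^ r)) - ?K"
    using sum_collision_prob_two_universal_le[OF tu supp] by (intro diff_right_mono mult_left_mono) auto
  also have "\<dots> = ?K * (2 ^ r * (\<Sum>x\<in>?D. (pmf P x)\<^sup>2))"
    by (simp add: field_simps)
  also have "\<dots> \<le> ?K * (2 ^ r * m)"
    using collision by (intro mult_left_mono) auto
  finally have "(\<Sum>h\<in>H. (?V h)\<^sup>2) \<le> ?K * (2 ^ r * m)" .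
  then have "(\<Sum>h\<in>H. ?V h) / ?K \<le> sqrt (2 ^ r * m)"
    by (rule mean_le_sqrt_of_sum_squares_le[OF H])
  then show ?thesis
    using H by (simp add: integral_pmf_of_set)
qed

section \<open>Tail bounds for i.i.d. sources\<close>

lemma ent_eq_sum_UNIV:
  fixes p :: "'a::finite pmf"
  shows "ent p = - (\<Sum>x\<in>UNIV. pmf p x * log 2 (pmf p x))"
  unfolding ent_def
  by (intro arg_cong[where f=uminus] sum.mono_neutral_left) (auto simp: set_pmf_iff)

lemma exp_minus_le_quadratic:
  fixes y :: real
  assumes "0 \<le> y"
  shows "exp (- y) \<le> 1 - y + y\<^sup>2 / 2"
proof -
  let ?f = "\<lambda>t::real. 1 - t + t\<^sup>2 / 2 - exp (- t)"
  have "?f 0 \<le> ?f y"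
  proof (rule DERIV_nonneg_imp_nondecreasing[OF assms])
    fix t :: real
    have "(?f has_real_derivative (t - 1 + exp (- t))) (at t)"
      by (auto intro!: derivative_eq_intros simp: power2_eq_square)
    moreover have "0 \<le> t - 1 + exp (- t)"
      using exp_ge_add_one_self[of "- t"] by linarith
    ultimately show "\<exists>d. (?f has_real_derivative d) (at t) \<and> 0 \<le> d"
      by blast
  qed
  then show ?thesis
    by simp
qed

lemma square_le_exp:
  fixes t :: real
  assumes "0 \<le> t"
  shows "t\<^sup>2 \<le> exp t"
proof -
  have "t \<le> 1 + t / 2 + (t / 2)\<^sup>2 / 2"
    using zero_le_power2[of "t - 2"] by (simp add: power2_eq_square field_simps)
  also have "\<dots> \<le> exp (t / 2)"
    using assms by (intro exp_lower_Taylor_quadratic) simp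
  finally have "t\<^sup>2 \<le> (exp (t / 2))\<^sup>2"
    using assms by (intro power_mono) auto
  also have "\<dots> = exp t"
    by (simp add: power2_eq_square exp_add[symmetric])
  finally show ?thesis .
qed

lemma mult_ln_square_le_1:
  fixes q :: real
  assumes "0 < q" "q \<le> 1"
  shows "q * (ln q)\<^sup>2 \<le> 1"
proof -
  have "q * (ln q)\<^sup>2 = (- ln q)\<^sup>2 * exp (- (- ln q))"
    using assms by simp
  also have "\<dots> \<le> exp (- ln q) * exp (- (- ln q))"
    using assms by (intro mult_right_mono square_le_exp) auto
  finally show ?thesis
    by (simp add: exp_minus)
qed

lemma powr_one_plus_le:
  fixes q s :: real
  assumes "0 \<le> q" "q \<le> 1" "0 \<le> s"
  shows "q powr (1 + s) \<le> q + s * (q * ln q) + s\<^sup>2 / 2"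
proof (cases "q = 0")
  case True
  then show ?thesis
    using assms by simp
next
  case False
  then have q: "0 < q"
    using assms by simp
  have "q powr (1 + s) = q * exp (- (s * - ln q))"
    using q by (simp add: powr_def distrib_right exp_add)
  also have "\<dots> \<le> q * (1 - s * - ln q + (s * - ln q)\<^sup>2 / 2)"
    using q assms by (intro mult_left_mono exp_minus_le_quadratic) (auto simp: mult_nonneg_nonpos)
  also have "\<dots> = q + s * (q * ln q) + s\<^sup>2 / 2 * (q * (ln q)\<^sup>2)"
    by (simp add: power2_eq_square algebra_simps)
  also have "\<dots> \<le> q + s * (q * ln q) + s\<^sup>2 / 2"
    using mult_ln_square_le_1[OF q assms(2)] by (simp add: mult_left_le)
  finally show ?thesis .
qed

lemma sum_pmf_powr_le_exp:
  fixes p :: "'a::finite pmf" and s :: real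
  assumes "0 \<le> s"
  shows "(\<Sum>x\<in>UNIV. pmf p x powr (1 + s)) \<le> exp (- s * (ent p * ln 2) + CARD('a) * s\<^sup>2 / 2)"
proof -
  have "(\<Sum>x\<in>UNIV. pmf p x powr (1 + s)) \<le> (\<Sum>x\<in>UNIV. pmf p x + s * (pmf p x * ln (pmf p x)) + s\<^sup>2 / 2)"
    by (intro sum_mono powr_one_plus_le) (auto simp: pmf_le_1 assms)
  also have "\<dots> = (\<Sum>x\<in>UNIV. pmf p x) - s * (ent p * ln 2) + CARD('a) * s\<^sup>2 / 2"
    by (simp add: ent_eq_sum_UNIV log_def sum.distrib sum_distrib_left sum_divide_distrib[symmetric])
  also have "(\<Sum>x\<in>UNIV. pmf p x) = 1"
    by (rule sum_pmf_eq_1) auto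
  also have "1 - s * (ent p * ln 2) + CARD('a) * s\<^sup>2 / 2 \<le> exp (- s * (ent p * ln 2) + CARD('a) * s\<^sup>2 / 2)"
    using exp_ge_add_one_self[of "- s * (ent p * ln 2) + CARD('a) * s\<^sup>2 / 2"] by linarith
  finally show ?thesis .
qed

lemma prod_list_map_powr:
  fixes f :: "'a \<Rightarrow> real"
  assumes "\<And>x. 0 \<le> f x"
  shows "prod_list (map f xs) powr a = prod_list (map (\<lambda>x. f x powr a) xs)"
proof (induction xs)
  case (Cons x xs)
  have "0 \<le> prod_list (map f xs)"
    using assms by (induction xs) simp_all
  then show ?case
    using Cons assms by (simp add: powr_mult)
qed simp

lemma sum_pmf_iid_above_le:
  fixes p :: "'a::finite pmf" and \<tau> s :: real
  assumes "0 < \<tau>" "0 < s"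
  shows "(\<Sum>x\<in>{x. length x = N \<and> pmf (iid N p) x > \<tau>}. pmf (iid N p) x)
         \<le> \<tau> powr (- s) * (\<Sum>a\<in>UNIV. pmf p a powr (1 + s)) ^ N"
proof -
  let ?Q = "iid N p"
  have "(\<Sum>x\<in>{x. length x = N \<and> pmf ?Q x > \<tau>}. pmf ?Q x)
      \<le> (\<Sum>x\<in>{x. length x = N \<and> pmf ?Q x > \<tau>}. \<tau> powr (- s) * pmf ?Q x powr (1 + s))"
  proof (rule sum_mono)
    fix x
    assume "x \<in> {x. length x = N \<and> pmf ?Q x > \<tau>}"
    then have above: "\<tau> < pmf ?Q x"
      by simp
    have "1 \<le> (pmf ?Q x / \<tau>) powr s"
      using above assms by (intro ge_one_powr_ge_zero) auto
    then have "pmf ?Q x \<le> pmf ?Q x * (pmf ?Q x / \<tau>) powr s"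
      using above assms by simp
    also have "\<dots> = \<tau> powr (- s) * pmf ?Q x powr (1 + s)"
      using above assms by (simp add: powr_divide powr_add powr_minus field_simps)
    finally show "pmf ?Q x \<le> \<tau> powr (- s) * pmf ?Q x powr (1 + s)" .
  qed
  also have "\<dots> \<le> (\<Sum>x\<in>{x. length x = N}. \<tau> powr (- s) * pmf ?Q x powr (1 + s))"
    by (rule sum_mono2) auto
  also have "\<dots> = \<tau> powr (- s) * (\<Sum>x\<in>{x. length x = N}. prod_list (map (\<lambda>a. pmf p a powr (1 + s)) x))"
    by (simp add: sum_distrib_left pmf_iid prod_list_map_powr)
  also have "\<dots> = \<tau> powr (- s) * (\<Sum>a\<in>UNIV. pmf p a powr (1 + s)) ^ N"
    by (simp add: sum_lists_length_prod_list)
  finally show ?thesis .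
qed

lemma sum_pmf_iid_above_entropy_le:
  fixes p :: "'a::finite pmf" and \<delta> :: real
  assumes "0 < \<delta>"
  shows "(\<Sum>x\<in>{x. length x = N \<and> pmf (iid N p) x > 2 powr (- (real N * (ent p - \<delta>)))}. pmf (iid N p) x)
         \<le> exp (- (real N * (\<delta> * ln 2)\<^sup>2 / (2 * CARD('a))))"
proof -
  \<comment> \<open>the value of s that minimises the resulting exponent\<close>
  define s where "s = \<delta> * ln 2 / CARD('a)"
  have s: "0 < s"
    using assms by (simp add: s_def)
  let ?\<tau> = "2 powr (- (real N * (ent p - \<delta>)))"
  have "(\<Sum>x\<in>{x. length x = N \<and> pmf (iid N p) x > ?\<tau>}. pmf (iid N p) x)
      \<le> ?\<tau> powr (- s) * (\<Sum>a\<in>UNIV. pmf p a powr (1 + s)) ^ N"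
    by (rule sum_pmf_iid_above_le[OF _ s]) simp
  also have "\<dots> \<le> ?\<tau> powr (- s) * exp (- s * (ent p * ln 2) + CARD('a) * s\<^sup>2 / 2) ^ N"
    using s by (intro mult_left_mono power_mono sum_pmf_powr_le_exp) (auto intro: sum_nonneg)
  also have "\<dots> = exp (s * (real N * (ent p - \<delta>)) * ln 2 + real N * (- s * (ent p * ln 2) + CARD('a) * s\<^sup>2 / 2))"
    by (simp add: powr_powr powr_def exp_add exp_of_nat_mult[symmetric])
  also have "s * (real N * (ent p - \<delta>)) * ln 2 + real N * (- s * (ent p * ln 2) + CARD('a) * s\<^sup>2 / 2)
      = - (real N * (\<delta> * ln 2)\<^sup>2 / (2 * CARD('a)))"
    by (simp add: s_def power2_eq_square field_simps)
  finally show ?thesis .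
qed

section \<open>Hashing an i.i.d. source\<close>

lemma measure_pmf_eq_sum_Int:
  assumes "finite A" "set_pmf p \<subseteq> A"
  shows "measure p S = (\<Sum>x\<in>A \<inter> S. pmf p x)"
proof -
  have "measure p S = measure p (A \<inter> S)"
    using assms(2) by (metis inf.absorb_iff2 inf_assoc inf_commute measure_Int_set_pmf)
  then show ?thesis
    using assms(1) by (simp add: measure_measure_pmf_finite)
qed

lemma vdist_cond_pmf:
  assumes "finite A" "set_pmf p \<subseteq> A" "set_pmf p \<inter> T \<noteq> {}"
  shows "vdist p (cond_pmf p T) = 2 * (1 - measure p T)"
proof -
  let ?P = "measure p T"
  have P: "?P = (\<Sum>x\<in>A \<inter> T. pmf p x)"
    by (rule measure_pmf_eq_sum_Int[OF assms(1,2)])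
  have "0 < ?P"
    using assms(3) measure_pmf_zero_iff[of p T] by (simp add: zero_less_measure_iff)
  then have ratio: "pmf p x \<le> pmf p x / ?P" for x
    by (simp add: le_divide_eq mult_left_le)
  have "(\<Sum>x\<in>A. pmf p x) = 1"
    by (rule sum_pmf_eq_1[OF assms(1,2)])
  then have rest: "(\<Sum>x\<in>A - T. pmf p x) = 1 - ?P"
    using P sum.Int_Diff[OF assms(1), of "pmf p" T] by simp
  have "vdist p (cond_pmf p T) = (\<Sum>x\<in>A. \<bar>pmf p x - pmf (cond_pmf p T) x\<bar>)"
    using assms by (intro vdist_eq_sum) auto
  also have "\<dots> = (\<Sum>x\<in>A \<inter> T. pmf p x / ?P - pmf p x) + (\<Sum>x\<in>A - T. pmf p x)"
    using ratio by (simp add: sum.Int_Diff[OF assms(1), of _ T] pmf_cond[OF assms(3)])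
  also have "\<dots> = 2 * (1 - ?P)"
    using \<open>0 < ?P\<close> rest by (simp add: sum_subtractf sum_divide_distrib[symmetric] P[symmetric])
  finally show ?thesis .
qed

lemma delta_A_bounds:
  fixes N :: nat
  assumes "1 \<le> N"
  defines "\<delta>A \<equiv> log 2 11 * sqrt (2 / real N * (3 + log 2 (real N)))"
  shows "0 < \<delta>A" and "1 + ln (real N) \<le> real N * (\<delta>A * ln 2)\<^sup>2 / 4"
proof -
  have ln_N: "0 \<le> ln (real N)"
    using assms by simp
  moreover have "ln 2 \<le> (1 :: real)"
    using ln_le_minus_one[of 2] by simp
  ultimately have log_N: "ln (real N) \<le> log 2 (real N)"
    by (simp add: log_def le_divide_eq mult_left_le)
  then have "0 \<le> log 2 (real N)"
    using ln_N by linarith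
  then have "0 < 3 + log 2 (real N)"
    by linarith
  then have arg: "0 < 2 / real N * (3 + log 2 (real N))"
    using assms by simp
  then show "0 < \<delta>A"
    by (simp add: \<delta>A_def)
  \<comment> \<open>all that is used of the constant 11 is ln 11 \<ge> 2\<close>
  have "exp (2 :: real) = exp 1 * exp 1"
    by (simp add: exp_add[symmetric])
  also have "\<dots> \<le> 3 * 3"
    using exp_le by (intro mult_mono) auto
  finally have "2 \<le> ln (11 :: real)"
    by (simp add: ln_ge_iff)
  then have "2\<^sup>2 \<le> (ln (11 :: real))\<^sup>2"
    by (intro power_mono) auto
  then have "6 + 2 * log 2 (real N) \<le> (ln 11)\<^sup>2 * (3 + log 2 (real N)) / 2"
    using \<open>0 < 3 + log 2 (real N)\<close> mult_right_mono[of 4 "(ln 11)\<^sup>2" "3 + log 2 (real N)"]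
    by simp
  also have "\<dots> = real N * (\<delta>A * ln 2)\<^sup>2 / 4"
    using arg assms by (simp add: \<delta>A_def power_mult_distrib log_def field_simps)
  finally show "1 + ln (real N) \<le> real N * (\<delta>A * ln 2)\<^sup>2 / 4"
    using log_N ln_N by linarith
qed

lemma prob_iid_atypical_le:
  fixes p :: "bool pmf" and N :: nat
  assumes "1 \<le> N"
  defines "\<delta>A \<equiv> log 2 11 * sqrt (2 / real N * (3 + log 2 (real N)))"
  shows "measure (iid N p) {x. 2 powr (- (real N * (ent p - \<delta>A))) < pmf (iid N p) x} \<le> 1 / (2 * real N)"
proof -
  let ?Q = "iid N p" and ?\<tau> = "2 powr (- (real N * (ent p - \<delta>A)))"
  have "measure ?Q {x. ?\<tau> < pmf ?Q x} = (\<Sum>x\<in>{x. length x = N \<and> pmf ?Q x > ?\<tau>}. pmf ?Q x)"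
    using set_pmf_iid by (subst measure_pmf_eq_sum_Int[of "{x. length x = N}"]) (auto simp: Int_def)
  also have "\<dots> \<le> exp (- (real N * (\<delta>A * ln 2)\<^sup>2 / 4))"
    using sum_pmf_iid_above_entropy_le[of "\<delta>A" N p] delta_A_bounds(1)[OF assms(1)]
    by (simp add: \<delta>A_def)
  also have "\<dots> \<le> exp (- (1 + ln (real N)))"
    using delta_A_bounds(2)[OF assms(1)] by (simp add: \<delta>A_def)
  also have "\<dots> = exp (- 1) / real N"
    using assms by (simp add: exp_diff)
  also have "\<dots> \<le> 1 / (2 * real N)"
    using assms exp_ge_add_one_self[of 1] by (simp add: exp_minus field_simps)
  finally show ?thesis .
qed

lemma iid_smoothing:
  fixes p :: "bool pmf" and N :: nat
  assumes "1 \<le> N"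
  defines "\<delta>A \<equiv> log 2 11 * sqrt (2 / real N * (3 + log 2 (real N)))"
  obtains P' where "vdist (iid N p) P' \<le> 1 / real N" "set_pmf P' \<subseteq> {x. length x = N}"
    "\<And>x. pmf P' x \<le> 2 * 2 powr (- (real N * (ent p - \<delta>A)))"
proof -
  let ?Q = "iid N p"
  define \<tau> where "\<tau> = 2 powr (- (real N * (ent p - \<delta>A)))"
  define T where "T = {x. pmf ?Q x \<le> \<tau>}"
  have "- T = {x. \<tau> < pmf ?Q x}"
    by (auto simp: T_def)
  then have tail: "1 - measure ?Q T \<le> 1 / (2 * real N)"
    using measure_pmf.prob_compl[of T ?Q] prob_iid_atypical_le[OF assms(1), of p]
    by (simp add: Compl_eq_Diff_UNIV \<tau>_def \<delta>A_def)
  moreover have "1 / (2 * real N) \<le> 1 / 2"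
    using assms by (simp add: field_simps)
  ultimately have half: "1 / 2 \<le> measure ?Q T"
    by linarith
  then have ne: "set_pmf ?Q \<inter> T \<noteq> {}"
    using measure_pmf_zero_iff[of ?Q T] by auto
  show thesis
  proof
    have "vdist ?Q (cond_pmf ?Q T) = 2 * (1 - measure ?Q T)"
      by (rule vdist_cond_pmf[OF _ set_pmf_iid ne]) simp
    then show "vdist ?Q (cond_pmf ?Q T) \<le> 1 / real N"
      using tail by simp
    show "set_pmf (cond_pmf ?Q T) \<subseteq> {x. length x = N}"
      using ne set_pmf_iid by auto
    show "pmf (cond_pmf ?Q T) x \<le> 2 * 2 powr (- (real N * (ent p - \<delta>A)))" for x
    proof (cases "x \<in> T")
      case True
      have "pmf (cond_pmf ?Q T) x = pmf ?Q x / measure ?Q T"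
        using True by (simp add: pmf_cond[OF ne])
      also have "\<dots> \<le> \<tau> / (1 / 2)"
        by (rule frac_le) (use True half in \<open>auto simp: T_def \<tau>_def\<close>)
      finally show ?thesis
        by (simp add: \<tau>_def mult.commute)
    next
      case False
      then show ?thesis
        by (simp add: pmf_cond[OF ne] \<tau>_def)
    qed
  qed
qed

lemma expectation_vdist_map_le:
  assumes "finite H" "H \<noteq> {}"
  shows "measure_pmf.expectation (pmf_of_set H) (\<lambda>g. vdist (map_pmf g P) R)
         \<le> vdist P P' + measure_pmf.expectation (pmf_of_set H) (\<lambda>g. vdist (map_pmf g P') R)"
proof -
  have int: "integrable (measure_pmf (pmf_of_set H)) f" for f :: "_ \<Rightarrow> real"
    using assms by (intro integrable_measure_pmf_finite) simp
  have "vdist (map_pmf g P) R \<le> vdist P P' + vdist (map_pmf g P') R" for g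
    using vdist_triangle[of "map_pmf g P" R "map_pmf g P'"] vdist_map_pmf[of g P P'] by linarith
  then have "measure_pmf.expectation (pmf_of_set H) (\<lambda>g. vdist (map_pmf g P) R)
      \<le> measure_pmf.expectation (pmf_of_set H) (\<lambda>g. vdist P P' + vdist (map_pmf g P') R)"
    by (intro integral_mono int)
  then show ?thesis
    using int by simp
qed

lemma expectation_vdist_hash_iid_le:
  fixes p :: "bool pmf" and N r :: nat and \<xi> :: real
  defines "\<delta>A \<equiv> log 2 11 * sqrt (2 / real N * (3 + log 2 (real N)))"
  assumes tu: "two_universal N r H" and N: "1 \<le> N"
    and r: "real r \<le> real N * (ent p - \<delta>A - \<xi>)"
  shows "measure_pmf.expectation (pmf_of_set H) (\<lambda>g. vdist (map_pmf g (iid N p)) (unif_bits r))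
         \<le> 2 / real N + sqrt 7 * 2 powr (- real N * \<xi> / 2)"
proof -
  let ?\<tau> = "2 powr (- (real N * (ent p - \<delta>A)))"
  obtain P' where P': "vdist (iid N p) P' \<le> 1 / real N" "set_pmf P' \<subseteq> {x. length x = N}"
    "\<And>x. pmf P' x \<le> 2 * ?\<tau>"
    using iid_smoothing[OF N] unfolding \<delta>A_def by blast
  have "2 ^ r * ?\<tau> = 2 powr (real r - real N * (ent p - \<delta>A))"
    by (simp add: powr_realpow[symmetric] powr_diff powr_minus divide_inverse)
  also have "\<dots> \<le> 2 powr (- real N * \<xi>)"
    using r by (intro powr_mono) (auto simp: algebra_simps)
  finally have rate: "2 ^ r * ?\<tau> \<le> 2 powr (- real N * \<xi>)" .
  have "2 ^ r * (2 * ?\<tau>) = 2 * (2 ^ r * ?\<tau>)"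
    by simp
  then have "2 ^ r * (2 * ?\<tau>) \<le> 7 * 2 powr (- real N * \<xi>)"
    using rate powr_ge_zero[of 2 "- real N * \<xi>"] by linarith
  then have "sqrt (2 ^ r * (2 * ?\<tau>)) \<le> sqrt (7 * 2 powr (- real N * \<xi>))"
    by simp
  also have "\<dots> = sqrt 7 * 2 powr (- real N * \<xi> / 2)"
    by (simp add: real_sqrt_mult powr_half_sqrt[symmetric] powr_powr)
  finally have lhl: "measure_pmf.expectation (pmf_of_set H) (\<lambda>g. vdist (map_pmf g P') (unif_bits r))
      \<le> sqrt 7 * 2 powr (- real N * \<xi> / 2)"
    using leftover_hash[OF tu P'(2,3)] by linarith
  have "finite H" "H \<noteq> {}"
    using tu unfolding two_universal_def by auto
  moreover have "1 / real N \<le> 2 / real N"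
    by (simp add: divide_right_mono)
  ultimately show ?thesis
    using expectation_vdist_map_le[of H "iid N p" "unif_bits r" P'] P'(1) lhl by linarith
qed

section \<open>Hashed encoder chains\<close>

fun encoder_chain :: "(bool list \<Rightarrow> bool list) \<Rightarrow> nat \<Rightarrow> nat \<Rightarrow> (bool list \<Rightarrow> bool list) \<Rightarrow> nat
    \<Rightarrow> bool list pmf" where
  "encoder_chain e l m g 0 = map_pmf e (unif_bits l)"
| "encoder_chain e l m g (Suc n) =
     bind_pmf (encoder_chain e l m g n) (\<lambda>x. map_pmf (\<lambda>d. e (g x @ d)) (unif_bits m))"

text \<open>A fresh encoding splits as e (a @ d) with independent uniform a and d, so a chain step differs
  from it only in that the hash of the previous output takes the place of a.\<close>

lemma vdist_encoder_chain_Suc_le: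
  assumes "l = r + m"
  shows "vdist (encoder_chain e l m g (Suc n)) Q
         \<le> vdist (map_pmf e (unif_bits l)) Q + vdist (encoder_chain e l m g n) Q
           + vdist (map_pmf g Q) (unif_bits r)"
proof -
  let ?K = "\<lambda>a. map_pmf (\<lambda>d. e (a @ d)) (unif_bits m)"
  have chain: "encoder_chain e l m g (Suc n) = bind_pmf (map_pmf g (encoder_chain e l m g n)) ?K"
    by (simp add: bind_map_pmf)
  have fresh: "map_pmf e (unif_bits l) = bind_pmf (unif_bits r) ?K"
    unfolding assms unif_bits_add by (simp add: map_bind_pmf pmf.map_comp o_def)
  have "vdist (encoder_chain e l m g (Suc n)) (map_pmf e (unif_bits l))
      \<le> vdist (map_pmf g (encoder_chain e l m g n)) (unif_bits r)"
    unfolding chain fresh by (rule vdist_bind_pmf_left)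
  also have "\<dots> \<le> vdist (encoder_chain e l m g n) Q + vdist (map_pmf g Q) (unif_bits r)"
    using vdist_triangle[of "map_pmf g (encoder_chain e l m g n)" "unif_bits r" "map_pmf g Q"]
      vdist_map_pmf[of g "encoder_chain e l m g n" Q] by linarith
  finally show ?thesis
    using vdist_triangle[of "encoder_chain e l m g (Suc n)" Q "map_pmf e (unif_bits l)"] by linarith
qed

lemma expectation_vdist_encoder_chain_le:
  assumes H: "finite H" "H \<noteq> {}" and l: "l = r + m"
    and enc: "vdist (map_pmf e (unif_bits l)) Q \<le> \<delta>"
    and hash: "measure_pmf.expectation (pmf_of_set H) (\<lambda>g. vdist (map_pmf g Q) (unif_bits r)) \<le> \<delta>0"
  shows "measure_pmf.expectation (pmf_of_set H) (\<lambda>g. vdist (encoder_chain e l m g n) Q)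
         \<le> real (Suc n) * \<delta> + real n * \<delta>0"
proof (induction n)
  case 0
  then show ?case
    using H enc by (simp add: integral_pmf_of_set)
next
  case (Suc n)
  have int: "integrable (measure_pmf (pmf_of_set H)) f" for f :: "_ \<Rightarrow> real"
    using H by (intro integrable_measure_pmf_finite) simp
  have "vdist (encoder_chain e l m g (Suc n)) Q
      \<le> \<delta> + vdist (encoder_chain e l m g n) Q + vdist (map_pmf g Q) (unif_bits r)" for g
    using vdist_encoder_chain_Suc_le[OF l, of e g n Q] enc by linarith
  then have "measure_pmf.expectation (pmf_of_set H) (\<lambda>g. vdist (encoder_chain e l m g (Suc n)) Q)
      \<le> measure_pmf.expectation (pmf_of_set H)
          (\<lambda>g. \<delta> + vdist (encoder_chain e l m g n) Q + vdist (map_pmf g Q) (unif_bits r))"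
    by (intro integral_mono int)
  also have "\<dots> = \<delta> + measure_pmf.expectation (pmf_of_set H) (\<lambda>g. vdist (encoder_chain e l m g n) Q)
      + measure_pmf.expectation (pmf_of_set H) (\<lambda>g. vdist (map_pmf g Q) (unif_bits r))"
    using int by simp
  also have "\<dots> \<le> real (Suc (Suc n)) * \<delta> + real (Suc n) * \<delta>0"
    using Suc hash by (simp add: algebra_simps)
  finally show ?case .
qed

lemma vdist_hashed_encoder_chain_iid_le:
  fixes p :: "bool pmf" and N r l m :: nat and \<xi> \<delta> h I :: real
  defines "\<delta>A \<equiv> log 2 11 * sqrt (2 / real N * (3 + log 2 (real N)))"
  defines "\<epsilon>1 \<equiv> 2 * (\<delta>A + \<xi>)"
      and "\<delta>0 \<equiv> 2 / real N + sqrt 7 * 2 powr (- real N * \<xi> / 2)"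
  assumes tu: "two_universal N r H" and N: "1 \<le> N"
    and h: "h \<le> ent p" "h + I = ent p"
    and rates: "real r = real N * (h - \<epsilon>1 / 2)" "real l = real N * (ent p + \<epsilon>1 / 2)"
      "real m = real N * (I + \<epsilon>1)"
    and enc: "vdist (map_pmf e (unif_bits l)) (iid N p) \<le> \<delta>"
  shows "vdist (bind_pmf (pmf_of_set H) (\<lambda>g. encoder_chain e l m g n)) (iid N p)
         \<le> real (Suc n) * \<delta> + real n * \<delta>0"
proof -
  have H: "finite H" "H \<noteq> {}"
    using tu unfolding two_universal_def by auto
  have "real l = real r + real m"
    using rates unfolding h(2)[symmetric] by (simp add: field_simps)
  then have l: "l = r + m"
    by linarith
  have "\<epsilon>1 / 2 = \<delta>A + \<xi>"
    by (simp add: \<epsilon>1_def)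
  then have "h - \<epsilon>1 / 2 \<le> ent p - \<delta>A - \<xi>"
    using h(1) by linarith
  then have "real r \<le> real N * (ent p - \<delta>A - \<xi>)"
    using rates(1) mult_left_mono[of _ _ "real N"] by simp
  then have "measure_pmf.expectation (pmf_of_set H) (\<lambda>g. vdist (map_pmf g (iid N p)) (unif_bits r)) \<le> \<delta>0"
    unfolding \<delta>0_def \<delta>A_def by (rule expectation_vdist_hash_iid_le[OF tu N])
  then have "measure_pmf.expectation (pmf_of_set H) (\<lambda>g. vdist (encoder_chain e l m g n) (iid N p))
      \<le> real (Suc n) * \<delta> + real n * \<delta>0"
    by (rule expectation_vdist_encoder_chain_le[OF H l enc])
  then show ?thesis
    using vdist_bind_pmf_mixture_left[of "pmf_of_set H"] by (rule order_trans[rotated])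
qed

context
  fixes W :: "bool \<Rightarrow> bool \<Rightarrow> 'z pmf"
    and eX eU eV :: "bool list \<Rightarrow> bool list"
    and lX lU lV mX mU mV :: nat
    and HX HU HV :: "(bool list \<Rightarrow> bool list) set"
begin

definition block_given_hashes :: "hashes \<Rightarrow> nat \<Rightarrow> 'z block pmf" where
  "block_given_hashes h n = (case h of (gX, gU, gV) \<Rightarrow>
     bind_pmf (encoder_chain eX lX mX gX n) (\<lambda>x. bind_pmf (encoder_chain eU lU mU gU n) (\<lambda>u.
       bind_pmf (encoder_chain eV lV mV gV n) (\<lambda>v. finish_block W x u v))))"

lemma length_scheme:
  "(h, bs) \<in> set_pmf (scheme W eX eU eV lX lU lV mX mU mV HX HU HV n) \<Longrightarrow> length bs = n"
proof (induction n arbitrary: h bs)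
  case (Suc n)
  then obtain h' bs' b where "(h', bs') \<in> set_pmf (scheme W eX eU eV lX lU lV mX mU mV HX HU HV n)" "bs = bs' @ [b]"
    by (auto split: if_splits)
  with Suc.IH show ?case
    by simp
qed auto

text \<open>Given the hashes, the three encoder chains evolve independently; the channel output of a
  block is never fed forward.\<close>

lemma bind_block_given_hashes_next_block:
  "bind_pmf (block_given_hashes h n) (next_block W eX eU eV mX mU mV h) = block_given_hashes h (Suc n)"
proof -
  obtain gX gU gV where h: "h = (gX, gU, gV)"
    by (cases h) auto
  \<comment> \<open>Each pass floats one closed draw to the front; doing so in reverse order of the right-hand
    side brings both sides into the same order.\<close>
  show ?thesis
    unfolding h block_given_hashes_def
    by (simp add: finish_block_def next_block_def Let_def bind_assoc_pmf bind_return_pmf bind_map_pmf,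
        simp only: bind_commute_pmf[of _ "unif_bits mV"];
        simp only: bind_commute_pmf[of _ "encoder_chain eV lV mV gV n"];
        simp only: bind_commute_pmf[of _ "unif_bits mU"];
        simp only: bind_commute_pmf[of _ "encoder_chain eU lU mU gU n"];
        simp only: bind_commute_pmf[of _ "unif_bits mX"];
        simp only: bind_commute_pmf[of _ "encoder_chain eX lX mX gX n"])
qed

lemma last_scheme_Suc:
  "map_pmf (\<lambda>(h, bs). (h, last bs)) (scheme W eX eU eV lX lU lV mX mU mV HX HU HV (Suc n))
   = bind_pmf (pmf_of_set HX) (\<lambda>gX. bind_pmf (pmf_of_set HU) (\<lambda>gU. bind_pmf (pmf_of_set HV) (\<lambda>gV.
       map_pmf (Pair (gX, gU, gV)) (block_given_hashes (gX, gU, gV) n))))"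
proof (induction n)
  case 0
  show ?case
    by (simp add: block_given_hashes_def first_block_def map_bind_pmf bind_assoc_pmf bind_return_pmf
        bind_map_pmf) (simp add: map_pmf_def)
next
  case (Suc n)
  have "bs \<noteq> []" if "(h, bs) \<in> set_pmf (scheme W eX eU eV lX lU lV mX mU mV HX HU HV (Suc n))" for h bs
    using length_scheme[OF that] by auto
  then have "map_pmf (\<lambda>(h, bs). (h, last bs)) (scheme W eX eU eV lX lU lV mX mU mV HX HU HV (Suc (Suc n)))
      = bind_pmf (map_pmf (\<lambda>(h, bs). (h, last bs)) (scheme W eX eU eV lX lU lV mX mU mV HX HU HV (Suc n)))
          (\<lambda>(h, b). map_pmf (Pair h) (next_block W eX eU eV mX mU mV h b))"
    unfolding scheme.simps(2)[of _ _ _ _ _ _ _ _ _ _ _ _ _ "Suc n"] map_bind_pmf bind_map_pmf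
    by (intro bind_pmf_cong refl) (force simp: map_bind_pmf map_pmf_def[symmetric] pmf.map_comp o_def)
  then show ?case
    unfolding Suc.IH
    by (simp add: bind_assoc_pmf bind_map_pmf map_bind_pmf[symmetric] bind_block_given_hashes_next_block)
qed

lemma nth_scheme_Suc:
  assumes "j < n"
  shows "map_pmf (\<lambda>(h, bs). bs ! j) (scheme W eX eU eV lX lU lV mX mU mV HX HU HV (Suc n)) = map_pmf (\<lambda>(h, bs). bs ! j) (scheme W eX eU eV lX lU lV mX mU mV HX HU HV n)"
proof -
  have "length bs = n" if "(h, bs) \<in> set_pmf (scheme W eX eU eV lX lU lV mX mU mV HX HU HV n)" for h bs
    using length_scheme[OF that] .
  then show ?thesis
    unfolding scheme.simps(2)[of _ _ _ _ _ _ _ _ _ _ _ _ _ n] map_bind_pmf map_pmf_def[of _ "scheme W eX eU eV lX lU lV mX mU mV HX HU HV n"]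
    using assms by (intro bind_pmf_cong refl) (force simp: map_bind_pmf nth_append)
qed

lemma nth_scheme_eq:
  assumes "1 \<le> i" "i \<le> k"
  shows "map_pmf (\<lambda>(h, bs). bs ! (i - 1)) (scheme W eX eU eV lX lU lV mX mU mV HX HU HV k)
       = bind_pmf (bind_pmf (pmf_of_set HX) (\<lambda>g. encoder_chain eX lX mX g (i - 1))) (\<lambda>x.
           bind_pmf (bind_pmf (pmf_of_set HU) (\<lambda>g. encoder_chain eU lU mU g (i - 1))) (\<lambda>u.
             bind_pmf (bind_pmf (pmf_of_set HV) (\<lambda>g. encoder_chain eV lV mV g (i - 1))) (\<lambda>v.
               finish_block W x u v)))"
  using assms(2)
proof (induction k rule: dec_induct)
  case base
  obtain j where i: "i = Suc j"
    using assms(1) by (cases i) auto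
  have "bs ! (i - 1) = last bs" if "(h, bs) \<in> set_pmf (scheme W eX eU eV lX lU lV mX mU mV HX HU HV i)" for h bs
    using length_scheme[OF that] i by (subst last_conv_nth) auto
  then have "map_pmf (\<lambda>(h, bs). bs ! (i - 1)) (scheme W eX eU eV lX lU lV mX mU mV HX HU HV i)
      = map_pmf snd (map_pmf (\<lambda>(h, bs). (h, last bs)) (scheme W eX eU eV lX lU lV mX mU mV HX HU HV i))"
    unfolding pmf.map_comp by (intro map_pmf_cong refl) force
  then show ?case
    unfolding i last_scheme_Suc
    by (simp add: map_bind_pmf pmf.map_comp o_def block_given_hashes_def bind_assoc_pmf,
        simp only: bind_commute_pmf[of "pmf_of_set HV"];
        simp only: bind_commute_pmf[of "pmf_of_set HU"];
        simp only: bind_commute_pmf[of "pmf_of_set HX"])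
next
  case (step k)
  then show ?case
    using nth_scheme_Suc[of "i - 1" k] assms(1) by simp
qed

end

section \<open>The i.i.d. target and entropy\<close>

definition cons_block :: "bool \<times> bool \<times> bool \<times> bool \<times> 'z \<Rightarrow> 'z block \<Rightarrow> 'z block" where
  "cons_block t b = (case t of (u, v, x, y, z) \<Rightarrow> case b of (us, vs, xs, ys, zs) \<Rightarrow>
     (u # us, v # vs, x # xs, y # ys, z # zs))"

lemma qN_Suc: "qN (Suc n) q = bind_pmf q (\<lambda>t. bind_pmf (qN n q) (\<lambda>b. return_pmf (cons_block t b)))"
  unfolding qN_def iid_Suc
  by (simp add: map_bind_pmf bind_map_pmf bind_assoc_pmf bind_return_pmf cons_block_def split_beta)

lemma finish_block_Cons:
  "finish_block W (x # xs) (u # us) (v # vs)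
   = bind_pmf (W x (u \<or> v)) (\<lambda>z. bind_pmf (finish_block W xs us vs) (\<lambda>b.
       return_pmf (cons_block (u, v, x, u \<or> v, z) b)))"
  by (simp add: finish_block_def channel_def Let_def bind_assoc_pmf bind_return_pmf cons_block_def)

lemma qN_q1_eq_finish_block_iid:
  "qN N (q1 W qU qV qX) = bind_pmf (iid N qX) (\<lambda>x. bind_pmf (iid N qU) (\<lambda>u.
       bind_pmf (iid N qV) (\<lambda>v. finish_block W x u v)))"
proof (induction N)
  case 0
  show ?case
    by (simp add: qN_def iid_def finish_block_def channel_def bind_return_pmf)
next
  case (Suc n)
  show ?case
    unfolding qN_Suc Suc.IH iid_Suc
    by (simp add: q1_def bind_assoc_pmf bind_return_pmf finish_block_Cons;
        simp only: bind_commute_pmf[of _ "iid n qV"]; simp only: bind_commute_pmf[of _ qV];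
        simp only: bind_commute_pmf[of _ "iid n qU"]; simp only: bind_commute_pmf[of _ qU];
        simp only: bind_commute_pmf[of _ "iid n qX"]; simp only: bind_commute_pmf[of _ qX])
qed

lemma pmf_le_pmf_map_pmf: "pmf p x \<le> pmf (map_pmf g p) (g x)"
proof -
  have "pmf p x = measure p {x}"
    by (simp add: measure_pmf_single)
  also have "\<dots> \<le> measure p (g -` {g x})"
    by (intro measure_pmf.finite_measure_mono) auto
  finally show ?thesis
    by (simp add: pmf_map)
qed

lemma sum_pmf_map_pmf_mult:
  fixes p :: "'a::finite pmf" and g :: "'a \<Rightarrow> 'b::finite" and \<phi> :: "'b \<Rightarrow> real"
  shows "(\<Sum>y\<in>UNIV. pmf (map_pmf g p) y * \<phi> y) = (\<Sum>x\<in>UNIV. pmf p x * \<phi> (g x))"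
proof -
  have "(\<Sum>y\<in>UNIV. pmf (map_pmf g p) y * \<phi> y) = measure_pmf.expectation (map_pmf g p) \<phi>"
    by (subst integral_measure_pmf_real[of UNIV]) (auto simp: mult.commute)
  also have "\<dots> = measure_pmf.expectation p (\<lambda>x. \<phi> (g x))"
    by simp
  also have "\<dots> = (\<Sum>x\<in>UNIV. pmf p x * \<phi> (g x))"
    by (subst integral_measure_pmf_real[of UNIV]) (auto simp: mult.commute)
  finally show ?thesis .
qed

lemma mult_log_ratio_ge:
  fixes a b c :: real
  assumes "0 < a" "0 < b" "0 < c"
  shows "(a - b * c) / ln 2 \<le> a * (log 2 a - log 2 b - log 2 c)"
proof -
  have "a * ln (b * c / a) \<le> a * (b * c / a - 1)"
    using assms by (intro mult_left_mono ln_le_minus_one) simp_all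
  also have "\<dots> = b * c - a"
    using assms by (simp add: field_simps)
  finally have "(a - b * c) / ln 2 \<le> a * (- ln (b * c / a)) / ln 2"
    by (intro divide_right_mono) simp_all
  also have "\<dots> = a * (log 2 a - log 2 b - log 2 c)"
    using assms by (simp add: log_def ln_div ln_mult field_simps)
  finally show ?thesis .
qed

text \<open>Gibbs' inequality against the product of the marginals.\<close>

lemma ent_le_ent_fst_plus_ent_snd:
  fixes p :: "('a::finite \<times> 'b::finite) pmf"
  shows "ent p \<le> ent (map_pmf fst p) + ent (map_pmf snd p)"
proof -
  let ?f = "pmf p" and ?fa = "pmf (map_pmf fst p)" and ?fb = "pmf (map_pmf snd p)"
  let ?g = "\<lambda>x. ?fa (fst x) * ?fb (snd x)"
  have pointwise: "(?f x - ?g x) / ln 2 \<le> ?f x * (log 2 (?f x) - log 2 (?fa (fst x)) - log 2 (?fb (snd x)))"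
    for x
  proof (cases "?f x = 0")
    case False
    then have f: "0 < ?f x"
      using pmf_nonneg[of p x] by linarith
    moreover have "?f x \<le> ?fa (fst x)" "?f x \<le> ?fb (snd x)"
      using pmf_le_pmf_map_pmf[of p x fst] pmf_le_pmf_map_pmf[of p x snd] by simp_all
    ultimately show ?thesis
      by (intro mult_log_ratio_ge) simp_all
  qed (simp add: divide_nonneg_pos)
  have "(\<Sum>x\<in>(UNIV :: ('a \<times> 'b) set). ?g x) = (\<Sum>a\<in>UNIV. \<Sum>b\<in>UNIV. ?fa a * ?fb b)"
    unfolding UNIV_Times_UNIV[symmetric] sum.cartesian_product by (simp add: case_prod_beta)
  also have "\<dots> = (\<Sum>a\<in>UNIV. ?fa a) * (\<Sum>b\<in>UNIV. ?fb b)"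
    by (simp add: sum_product)
  also have "\<dots> = (\<Sum>x\<in>UNIV. ?f x)"
    by (simp add: sum_pmf_eq_1)
  finally have "0 = (\<Sum>x\<in>UNIV. (?f x - ?g x) / ln 2)"
    by (simp add: sum_divide_distrib[symmetric] sum_subtractf)
  also have "\<dots> \<le> (\<Sum>x\<in>UNIV. ?f x * (log 2 (?f x) - log 2 (?fa (fst x)) - log 2 (?fb (snd x))))"
    by (rule sum_mono) (rule pointwise)
  also have "\<dots> = ent (map_pmf fst p) + ent (map_pmf snd p) - ent p"
    unfolding ent_eq_sum_UNIV sum_pmf_map_pmf_mult by (simp add: sum_subtractf sum.distrib algebra_simps)
  finally show ?thesis
    by simp
qed

lemma q1_marginals:
  "map_pmf (\<lambda>(u, v, x, y, z). u) (q1 W qU qV qX) = qU"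
  "map_pmf (\<lambda>(u, v, x, y, z). v) (q1 W qU qV qX) = qV"
  "map_pmf (\<lambda>(u, v, x, y, z). x) (q1 W qU qV qX) = qX"
  by (simp_all add: q1_def map_bind_pmf bind_return_pmf')

lemma ent_pair_le:
  fixes p :: "'a pmf" and f :: "'a \<Rightarrow> 'b::finite" and g :: "'a \<Rightarrow> 'c::finite"
  shows "ent (map_pmf (\<lambda>w. (f w, g w)) p) \<le> ent (map_pmf f p) + ent (map_pmf g p)"
  using ent_le_ent_fst_plus_ent_snd[of "map_pmf (\<lambda>w. (f w, g w)) p"] by (simp add: pmf.map_comp o_def)

lemma q1_conditional_entropies_le:
  fixes W :: "bool \<Rightarrow> bool \<Rightarrow> 'z::finite pmf" and qU qV qX :: "bool pmf"
  defines "q \<equiv> q1 W qU qV qX"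
  shows "ent (map_pmf (\<lambda>(u,v,x,y,z). (x,u,z)) q) - ent (map_pmf (\<lambda>(u,v,x,y,z). (u,z)) q) \<le> ent qX"
    and "ent (map_pmf (\<lambda>(u,v,x,y,z). (u,z)) q) - ent (map_pmf (\<lambda>(u,v,x,y,z). z) q) \<le> ent qU"
    and "ent (map_pmf (\<lambda>(u,v,x,y,z). (v,u,z,x)) q) - ent (map_pmf (\<lambda>(u,v,x,y,z). (u,z,x)) q) \<le> ent qV"
proof -
  have xuz: "(\<lambda>w. ((\<lambda>(u,v,x,y,z). x) w, (\<lambda>(u,v,x,y,z). (u,z)) w)) = (\<lambda>(u,v,x,y,z). (x,u,z))"
    and uz: "(\<lambda>w. ((\<lambda>(u,v,x,y,z). u) w, (\<lambda>(u,v,x,y,z). z) w)) = (\<lambda>(u,v,x,y,z). (u,z))"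
    and vuzx: "(\<lambda>w. ((\<lambda>(u,v,x,y,z). v) w, (\<lambda>(u,v,x,y,z). (u,z,x)) w)) = (\<lambda>(u,v,x,y,z). (v,u,z,x))"
    by (simp_all add: fun_eq_iff split_beta)
  show "ent (map_pmf (\<lambda>(u,v,x,y,z). (x,u,z)) q) - ent (map_pmf (\<lambda>(u,v,x,y,z). (u,z)) q) \<le> ent qX"
    using ent_pair_le[of "\<lambda>(u,v,x,y,z). x" "\<lambda>(u,v,x,y,z). (u,z)" q, unfolded xuz]
    by (simp add: q_def q1_marginals)
  show "ent (map_pmf (\<lambda>(u,v,x,y,z). (u,z)) q) - ent (map_pmf (\<lambda>(u,v,x,y,z). z) q) \<le> ent qU"
    using ent_pair_le[of "\<lambda>(u,v,x,y,z). u" "\<lambda>(u,v,x,y,z). z" q, unfolded uz]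
    by (simp add: q_def q1_marginals)
  show "ent (map_pmf (\<lambda>(u,v,x,y,z). (v,u,z,x)) q) - ent (map_pmf (\<lambda>(u,v,x,y,z). (u,z,x)) q) \<le> ent qV"
    using ent_pair_le[of "\<lambda>(u,v,x,y,z). v" "\<lambda>(u,v,x,y,z). (u,z,x)" q, unfolded vuzx]
    by (simp add: q_def q1_marginals)
qed

lemma linear_le_geometric:
  fixes \<delta> \<delta>0 :: real
  assumes "1 \<le> i" "0 \<le> \<delta>" "0 \<le> \<delta>0"
  shows "3 * (real i * \<delta> + real (i - 1) * \<delta>0) \<le> 3 / 2 * (\<delta> + \<delta>0) * (3 ^ i - 1) + 3 ^ (i + 1) * \<delta>"
proof -
  have a: "3 * real i \<le> 3 / 2 * (3 ^ i - 1)"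
    using Bernoulli_inequality[of "2 :: real" i] by simp
  then have b: "3 * real (i - 1) \<le> 3 / 2 * (3 ^ i - 1)"
    using assms(1) by (simp add: of_nat_diff)
  have "3 * (real i * \<delta> + real (i - 1) * \<delta>0) = (3 * real i) * \<delta> + (3 * real (i - 1)) * \<delta>0"
    by (simp add: algebra_simps)
  also have "\<dots> \<le> 3 / 2 * (3 ^ i - 1) * \<delta> + 3 / 2 * (3 ^ i - 1) * \<delta>0"
    using a b assms(2,3) by (intro add_mono mult_right_mono)
  also have "\<dots> \<le> 3 / 2 * (3 ^ i - 1) * \<delta> + 3 / 2 * (3 ^ i - 1) * \<delta>0 + 3 ^ (i + 1) * \<delta>"
    using assms(2) by simp
  also have "\<dots> = 3 / 2 * (\<delta> + \<delta>0) * (3 ^ i - 1) + 3 ^ (i + 1) * \<delta>"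
    by (simp add: field_simps)
  finally show ?thesis .
qed

theorem lemma3:
  fixes W :: "bool \<Rightarrow> bool \<Rightarrow> ('z::finite) pmf"
    and qU qV qX :: "bool pmf"
    and N k i :: nat and \<xi> \<delta> :: real
    and rX rU rV lX lU lV mX mU mV :: nat
    and HX HU HV :: "(bool list \<Rightarrow> bool list) set"
    and eX eU eV :: "bool list \<Rightarrow> bool list"
  defines "q \<equiv> q1 W qU qV qX"
  defines "HXgUZ \<equiv> ent (map_pmf (\<lambda>(u,v,x,y,z). (x,u,z)) q) - ent (map_pmf (\<lambda>(u,v,x,y,z). (u,z)) q)"
      and "HUgZ \<equiv> ent (map_pmf (\<lambda>(u,v,x,y,z). (u,z)) q) - ent (map_pmf (\<lambda>(u,v,x,y,z). z) q)"
      and "HVgUZX \<equiv> ent (map_pmf (\<lambda>(u,v,x,y,z). (v,u,z,x)) q) - ent (map_pmf (\<lambda>(u,v,x,y,z). (u,z,x)) q)"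
      and "IX_UZ \<equiv> ent (map_pmf (\<lambda>(u,v,x,y,z). x) q) + ent (map_pmf (\<lambda>(u,v,x,y,z). (u,z)) q)
                    - ent (map_pmf (\<lambda>(u,v,x,y,z). (x,u,z)) q)"
      and "IU_Z \<equiv> ent (map_pmf (\<lambda>(u,v,x,y,z). u) q) + ent (map_pmf (\<lambda>(u,v,x,y,z). z) q)
                    - ent (map_pmf (\<lambda>(u,v,x,y,z). (u,z)) q)"
      and "IV_UZX \<equiv> ent (map_pmf (\<lambda>(u,v,x,y,z). v) q) + ent (map_pmf (\<lambda>(u,v,x,y,z). (u,z,x)) q)
                    - ent (map_pmf (\<lambda>(u,v,x,y,z). (v,u,z,x)) q)"
  defines "\<delta>A \<equiv> log 2 11 * sqrt (2 / real N * (3 + log 2 (real N)))"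
  defines "\<epsilon>1 \<equiv> 2 * (\<delta>A + \<xi>)"
      and "\<delta>0 \<equiv> 2 / real N + sqrt 7 * 2 powr (- real N * \<xi> / 2)"
  assumes "N \<ge> 1" and "\<xi> > 0"
      and "real rX = real N * (HXgUZ - \<epsilon>1 / 2)"
      and "real rU = real N * (HUgZ - \<epsilon>1 / 2)"
      and "real rV = real N * (HVgUZX - \<epsilon>1 / 2)"
      and "real lX = real N * (ent qX + \<epsilon>1 / 2)"
      and "real lU = real N * (ent qU + \<epsilon>1 / 2)"
      and "real lV = real N * (ent qV + \<epsilon>1 / 2)"
      and "real mX = real N * (IX_UZ + \<epsilon>1)"
      and "real mU = real N * (IU_Z + \<epsilon>1)"
      and "real mV = real N * (IV_UZX + \<epsilon>1)"
      and "two_universal N rX HX" and "two_universal N rU HU" and "two_universal N rV HV"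
      and "\<forall>s. length s = lX \<longrightarrow> length (eX s) = N"
      and "\<forall>s. length s = lU \<longrightarrow> length (eU s) = N"
      and "\<forall>s. length s = lV \<longrightarrow> length (eV s) = N"
      and "vdist (map_pmf eX (unif_bits lX)) (iid N qX) \<le> \<delta>"
      and "vdist (map_pmf eU (unif_bits lU)) (iid N qU) \<le> \<delta>"
      and "vdist (map_pmf eV (unif_bits lV)) (iid N qV) \<le> \<delta>"
      and "1 \<le> i" and "i \<le> k"
  shows "vdist (map_pmf (\<lambda>(h, bs). bs ! (i - 1)) (scheme W eX eU eV lX lU lV mX mU mV HX HU HV k))
               (qN N q)
         \<le> 3 / 2 * (\<delta> + \<delta>0) * (3 ^ i - 1) + 3 ^ (i + 1) * \<delta>"
proof -
  have cond: "HXgUZ \<le> ent qX" "HUgZ \<le> ent qU" "HVgUZX \<le> ent qV"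
    using q1_conditional_entropies_le[of W qU qV qX]
    unfolding HXgUZ_def HUgZ_def HVgUZX_def q_def by simp_all
  have chain_rule: "HXgUZ + IX_UZ = ent qX" "HUgZ + IU_Z = ent qU" "HVgUZX + IV_UZX = ent qV"
    unfolding HXgUZ_def HUgZ_def HVgUZX_def IX_UZ_def IU_Z_def IV_UZX_def q_def
    by (simp_all add: q1_marginals)
  define B where "B = real i * \<delta> + real (i - 1) * \<delta>0"
  note chain_bound = vdist_hashed_encoder_chain_iid_le[where N = N and \<xi> = \<xi> and n = "i - 1",
      folded \<delta>A_def \<epsilon>1_def \<delta>0_def, unfolded Suc_diff_1[OF assms(31)[unfolded One_nat_def Suc_le_eq]]]
  have "vdist (map_pmf (\<lambda>(h, bs). bs ! (i - 1)) (scheme W eX eU eV lX lU lV mX mU mV HX HU HV k)) (qN N q)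
      \<le> 3 * B"
    unfolding nth_scheme_eq[OF assms(31,32)] q_def qN_q1_eq_finish_block_iid
    using chain_bound[OF assms(22,11) cond(1) chain_rule(1) assms(13,16,19,28)]
      chain_bound[OF assms(23,11) cond(2) chain_rule(2) assms(14,17,20,29)]
      chain_bound[OF assms(24,11) cond(3) chain_rule(3) assms(15,18,21,30)] B_def
    by (intro order_trans[OF vdist_bind_pmf3]) linarith
  also have "\<dots> \<le> 3 / 2 * (\<delta> + \<delta>0) * (3 ^ i - 1) + 3 ^ (i + 1) * \<delta>"
    unfolding B_def using assms(28) vdist_nonneg[of "map_pmf eX (unif_bits lX)" "iid N qX"]
    by (intro linear_le_geometric assms(31)) (auto simp: \<delta>0_def)
  finally show ?thesis .
qed

end
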